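(* Let $R$ be a commutative ring with $2\in R^\times$. Define $\eta:GL(R)\to W'_E(R)$ by sending $G\in GL_{2n}(R)$ to the class of $G^t\psi_{2n}G$ and $G\in GL_{2n+1}(R)$ to the class of $(G\perp 1)^t\psi_{2n+2}(G\perp1)$. Then $\eta$ is well defined and induces a group homomorphism $\eta:K_1(R)\to W'_E(R)$.
   Context: $M\perp N$ denotes the block diagonal matrix $\begin{pmatrix}M&0\\0&N\end{pmatrix}$; $GL(R)=\bigcup_n GL_n(R)$ via $G\mapsto G\perp 1$, and $K_1(R)=GL(R)/E(R)$ with $E(R)$ the elementary subgroup. Let $\psi_2=\begin{pmatrix}0&1\\-1&0\end{pmatrix}$ and $\psi_{2r}=\psi_2\perp\psi_{2r-2}$. Let $S'_{2n}(R)$ be the set of invertible alternating $2n\times 2n$ matrices over $R$; for $m<n$, $S'_{2m}(R)\subset S'_{2n}(R)$ via $G\mapsto G\perp\psi_{2n-2m}$, and $S'(R)=\bigcup_n S'_{2n}(R)$. For $G\in S'_{2n}(R)$, $G'\in S'_{2m}(R)$, $G\sim G'$ iff there are $t\in\mathbb N$ and $E\in E_{2(m+n+t)}(R)$ with $G\perp\psi_{2(m+t)}=E^t(G'\perp\psi_{2(n+t)})E$. $W'_E(R):=S'(R)/\sim$ is an abelian group under $\perp$ with neutral element the class of $\psi_2$. *)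

theory Defs
  imports "Jordan_Normal_Form.Matrix"
begin

definition bdiag :: "'a::zero mat \<Rightarrow> 'a mat \<Rightarrow> 'a mat" where
  "bdiag M N = four_block_mat M (0\<^sub>m (dim_row M) (dim_col N)) (0\<^sub>m (dim_row N) (dim_col M)) N"

definition GL :: "nat \<Rightarrow> 'a::comm_ring_1 mat set" where
  "GL n = {G. G \<in> carrier_mat n n \<and> invertible_mat G}"

definition elem_mat :: "nat \<Rightarrow> nat \<Rightarrow> nat \<Rightarrow> 'a::comm_ring_1 \<Rightarrow> 'a mat" where
  "elem_mat n i j a = mat n n (\<lambda>(k,l). (if k = l then 1 else 0) + (if k = i \<and> l = j then a else 0))"

text \<open>Elementary subgroup E_n(R): generated (as a monoid, hence as a group since
  elementary matrices have elementary inverses) by the elementary matrices.\<close>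
inductive_set Elem :: "nat \<Rightarrow> 'a::comm_ring_1 mat set" for n where
  Elem_one: "1\<^sub>m n \<in> Elem n"
| Elem_step: "E \<in> Elem n \<Longrightarrow> i < n \<Longrightarrow> j < n \<Longrightarrow> i \<noteq> j \<Longrightarrow> E * elem_mat n i j a \<in> Elem n"

definition stab :: "'a::comm_ring_1 mat \<Rightarrow> nat \<Rightarrow> 'a mat" where
  "stab G k = bdiag G (1\<^sub>m (k - dim_row G))"

definition K1_equiv :: "'a::comm_ring_1 mat \<Rightarrow> 'a mat \<Rightarrow> bool" where
  "K1_equiv G H = (\<exists>k E. dim_row G \<le> k \<and> dim_row H \<le> k \<and> E \<in> Elem k \<and>
      stab G k = stab H k * E)"

definition psi2 :: "'a::comm_ring_1 mat" where
  "psi2 = mat 2 2 (\<lambda>(i,j). if i = 0 \<and> j = 1 then 1 else if i = 1 \<and> j = 0 then -1 else 0)"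

text \<open>psi r is the matrix psi_{2r}.\<close>
fun psi :: "nat \<Rightarrow> 'a::comm_ring_1 mat" where
  "psi 0 = 0\<^sub>m 0 0"
| "psi (Suc r) = bdiag psi2 (psi r)"

definition alternating :: "'a::comm_ring_1 mat \<Rightarrow> bool" where
  "alternating A = (square_mat A \<and> transpose_mat A = - A \<and> (\<forall>i < dim_row A. A $$ (i,i) = 0))"

definition Sp' :: "nat \<Rightarrow> 'a::comm_ring_1 mat set" where
  "Sp' n = {G. G \<in> carrier_mat (2*n) (2*n) \<and> alternating G \<and> invertible_mat G}"

definition S' :: "'a::comm_ring_1 mat set" where
  "S' = (\<Union>n. Sp' n)"

definition W_equiv :: "'a::comm_ring_1 mat \<Rightarrow> 'a mat \<Rightarrow> bool" where
  "W_equiv G G' = (\<exists>n m. G \<in> Sp' n \<and> G' \<in> Sp' m \<and>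
     (\<exists>t E. E \<in> Elem (2*(m+n+t)) \<and>
        bdiag G (psi (m+t)) = transpose_mat E * bdiag G' (psi (n+t)) * E))"

definition eta :: "'a::comm_ring_1 mat \<Rightarrow> 'a mat" where
  "eta G = (if even (dim_row G) then transpose_mat G * psi (dim_row G div 2) * G
            else transpose_mat (bdiag G (1\<^sub>m 1)) * psi (dim_row G div 2 + 1) * bdiag G (1\<^sub>m 1))"

end

theory Submission
  imports Defs
begin

text \<open>For G of even size, \<eta>(G) = G^T \<psi> G is congruent to the alternating invertible matrix \<psi>,
  hence lies in S'. Odd matrices are first padded by 1, and stabilising G to G \<perp> 1 only appends
  blocks \<psi>_2 to \<eta>(G). Replacing G by G E with E elementary replaces \<eta>(G) by the congruent
  matrix E^T \<eta>(G) E, so \<eta> respects equality in K_1. Finally, by Whitehead's lemma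
  W = H \<perp> H\<inverse> is elementary, and (G H) \<perp> 1 = (G \<perp> H) W gives
  \<eta>(G H) \<perp> \<psi> \<sim> \<eta>(G) \<perp> \<eta>(H).\<close>

lemma dim_bdiag [simp]:
  "dim_row (bdiag A B) = dim_row A + dim_row B"
  "dim_col (bdiag A B) = dim_col A + dim_col B"
  unfolding bdiag_def by auto

lemma bdiag_carrier_mat [simp]:
  "A \<in> carrier_mat a a \<Longrightarrow> B \<in> carrier_mat b b \<Longrightarrow> bdiag A B \<in> carrier_mat (a + b) (a + b)"
  unfolding bdiag_def by auto

lemma bdiag_mult:
  assumes "A \<in> carrier_mat a a" "A' \<in> carrier_mat a a" "B \<in> carrier_mat b b" "B' \<in> carrier_mat b b"
  shows "bdiag A B * bdiag A' B' = bdiag (A * A') (B * B')"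
  unfolding bdiag_def using assms by (subst mult_four_block_mat[of A a a _ b _ b B A' a _ b]) auto

lemma transpose_bdiag:
  assumes "A \<in> carrier_mat a a" "B \<in> carrier_mat b b"
  shows "transpose_mat (bdiag A B) = bdiag (transpose_mat A) (transpose_mat B)"
  unfolding bdiag_def using assms by (subst transpose_four_block_mat[of A a a _ b _ b B]) auto

lemma bdiag_assoc:
  assumes "A \<in> carrier_mat a a" "B \<in> carrier_mat b b" "C \<in> carrier_mat c c"
  shows "bdiag (bdiag A B) C = bdiag A (bdiag B C)"
  by (rule eq_matI) (use assms in \<open>auto simp: bdiag_def\<close>)

lemma bdiag_one_mat [simp]: "bdiag (1\<^sub>m a) (1\<^sub>m b) = 1\<^sub>m (a + b)"
  unfolding bdiag_def by simp

lemma bdiag_uminus: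
  fixes A :: "'a::ring mat"
  assumes "A \<in> carrier_mat a a" "B \<in> carrier_mat b b"
  shows "bdiag (- A) (- B) = - bdiag A B"
  by (rule eq_matI) (use assms in \<open>auto simp: bdiag_def\<close>)

lemma bdiag_empty_right: "B \<in> carrier_mat 0 0 \<Longrightarrow> bdiag A B = A"
  by (rule eq_matI) (auto simp: bdiag_def)

lemma bdiag_empty_left: "A \<in> carrier_mat 0 0 \<Longrightarrow> bdiag A B = B"
  by (rule eq_matI) (auto simp: bdiag_def)

definition inverse_mats :: "nat \<Rightarrow> 'a::comm_ring_1 mat \<Rightarrow> 'a mat \<Rightarrow> bool" where
  "inverse_mats n A B \<longleftrightarrow>
     A \<in> carrier_mat n n \<and> B \<in> carrier_mat n n \<and> A * B = 1\<^sub>m n \<and> B * A = 1\<^sub>m n"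

lemma inverse_mats_mult:
  assumes "inverse_mats n A B" "inverse_mats n C D"
  shows "inverse_mats n (A * C) (D * B)"
proof -
  have c: "A \<in> carrier_mat n n" "B \<in> carrier_mat n n" "C \<in> carrier_mat n n" "D \<in> carrier_mat n n"
    and e: "A * B = 1\<^sub>m n" "B * A = 1\<^sub>m n" "C * D = 1\<^sub>m n" "D * C = 1\<^sub>m n"
    using assms by (auto simp: inverse_mats_def)
  have "A * C * (D * B) = A * (C * D) * B" "D * B * (A * C) = D * (B * A) * C"
    using c by (simp_all add: assoc_mult_mat[of _ n n _ n _ n])
  then show ?thesis using c e by (simp add: inverse_mats_def)
qed

lemma inverse_mats_transpose:
  assumes "inverse_mats n A B"
  shows "inverse_mats n (transpose_mat A) (transpose_mat B)"
proof -
  have c: "A \<in> carrier_mat n n" "B \<in> carrier_mat n n" and "A * B = 1\<^sub>m n" "B * A = 1\<^sub>m n"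
    using assms by (auto simp: inverse_mats_def)
  moreover have "transpose_mat A * transpose_mat B = transpose_mat (B * A)"
    "transpose_mat B * transpose_mat A = transpose_mat (A * B)"
    using c by (simp_all add: transpose_mult)
  ultimately show ?thesis by (simp add: inverse_mats_def)
qed

lemma inverse_mats_bdiag:
  "inverse_mats a A B \<Longrightarrow> inverse_mats b C D \<Longrightarrow> inverse_mats (a + b) (bdiag A C) (bdiag B D)"
  unfolding inverse_mats_def by (auto simp: bdiag_mult)

lemma inverse_mats_one: "inverse_mats n (1\<^sub>m n) (1\<^sub>m n)"
  by (auto simp: inverse_mats_def)

lemma inverse_mats_invertible_mat: "inverse_mats n A B \<Longrightarrow> invertible_mat A"
  unfolding inverse_mats_def invertible_mat_def inverts_mat_def by auto

lemma GL_iff_inverse_mats: "G \<in> GL n \<longleftrightarrow> (\<exists>B. inverse_mats n G B)"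
proof
  assume "G \<in> GL n"
  then have G: "G \<in> carrier_mat n n" and "invertible_mat G"
    by (simp_all add: GL_def)
  then obtain B where "inverts_mat G B" "inverts_mat B G"
    unfolding invertible_mat_def by blast
  then have GB: "G * B = 1\<^sub>m n" and BG: "B * G = 1\<^sub>m (dim_row B)"
    using G by (simp_all add: inverts_mat_def)
  have "dim_col B = n"
    using arg_cong[OF GB, of dim_col] by simp
  moreover have "dim_row B = n"
    using arg_cong[OF BG, of dim_col] G by simp
  ultimately have B: "B \<in> carrier_mat n n"
    by blast
  then have "B * G = 1\<^sub>m n"
    using BG by simp
  with G B GB show "\<exists>B. inverse_mats n G B"
    unfolding inverse_mats_def by blast
next
  assume "\<exists>B. inverse_mats n G B"
  then obtain B where B: "inverse_mats n G B" ..
  then have "G \<in> carrier_mat n n"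
    by (simp add: inverse_mats_def)
  with inverse_mats_invertible_mat[OF B] show "G \<in> GL n"
    by (simp add: GL_def)
qed

lemma GL_carrier_mat: "G \<in> GL n \<Longrightarrow> G \<in> carrier_mat n n"
  by (simp add: GL_def)

lemma GL_mult: "G \<in> GL n \<Longrightarrow> H \<in> GL n \<Longrightarrow> G * H \<in> GL n"
  unfolding GL_iff_inverse_mats using inverse_mats_mult by blast

lemma GL_bdiag_one: "G \<in> GL m \<Longrightarrow> bdiag G (1\<^sub>m s) \<in> GL (m + s)"
  unfolding GL_iff_inverse_mats using inverse_mats_bdiag inverse_mats_one by blast

section \<open>The standard alternating form\<close>

lemma psi2_carrier_mat [simp]: "psi2 \<in> carrier_mat 2 2"
  unfolding psi2_def by auto

lemma psi_carrier_mat [simp]: "psi r \<in> carrier_mat (2 * r) (2 * r)"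
proof (induction r)
  case (Suc r)
  have "2 * Suc r = 2 + 2 * r" by simp
  then show ?case
    using bdiag_carrier_mat[OF psi2_carrier_mat Suc.IH] by (simp only: psi.simps)
qed simp

lemma dim_psi [simp]: "dim_row (psi r) = 2 * r" "dim_col (psi r) = 2 * r"
  by (rule carrier_matD[OF psi_carrier_mat])+

lemma psi_add: "psi (a + b) = bdiag (psi a) (psi b)"
proof (induction a)
  case (Suc a)
  then show ?case
    by (simp add: bdiag_assoc[OF psi2_carrier_mat psi_carrier_mat psi_carrier_mat])
qed (simp add: bdiag_empty_left)

lemma psi2_square: "psi2 * psi2 = - 1\<^sub>m 2"
  by (rule eq_matI) (auto simp: psi2_def scalar_prod_def numeral_2_eq_2 less_Suc_eq)

lemma psi_square: "psi r * psi r = (- 1\<^sub>m (2 * r) :: 'a::comm_ring_1 mat)"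
proof (induction r)
  case (Suc r)
  have "psi (Suc r) * psi (Suc r) = bdiag (psi2 * psi2) (psi r * psi r :: 'a mat)"
    by (simp add: bdiag_mult[of psi2 2 psi2 "psi r" "2 * r"])
  also have "\<dots> = bdiag (- 1\<^sub>m 2) (- 1\<^sub>m (2 * r))"
    by (simp only: psi2_square Suc.IH)
  also have "\<dots> = - 1\<^sub>m (2 * Suc r)"
    by (simp add: bdiag_uminus[of "1\<^sub>m 2" 2 "1\<^sub>m (2 * r)" "2 * r"])
  finally show ?case .
qed (rule eq_matI; auto)

lemma transpose_psi: "transpose_mat (psi r) = (- psi r :: 'a::comm_ring_1 mat)"
proof (induction r)
  case (Suc r)
  have psi2: "transpose_mat psi2 = (- psi2 :: 'a mat)"
    by (rule eq_matI) (auto simp: psi2_def numeral_2_eq_2 less_Suc_eq)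
  have "transpose_mat (psi (Suc r)) = bdiag (transpose_mat psi2) (transpose_mat (psi r :: 'a mat))"
    by (simp add: transpose_bdiag[of psi2 2 "psi r" "2 * r"])
  also have "\<dots> = bdiag (- psi2) (- psi r)"
    by (simp only: psi2 Suc.IH)
  also have "\<dots> = - psi (Suc r)"
    by (simp add: bdiag_uminus[of psi2 2 "psi r" "2 * r"])
  finally show ?case .
qed (rule eq_matI; auto)

lemma psi_diag: "i < 2 * r \<Longrightarrow> psi r $$ (i, i) = 0"
proof (induction r arbitrary: i)
  case (Suc r)
  then show ?case
    by (cases "i < 2") (auto simp: bdiag_def psi2_def numeral_2_eq_2 less_Suc_eq)
qed simp

lemma alternating_psi: "alternating (psi r)"
  unfolding alternating_def by (simp add: transpose_psi psi_diag)

lemma inverse_mats_psi: "inverse_mats (2 * r) (psi r) (- psi r)"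
  unfolding inverse_mats_def by (auto simp: psi_square)

lemma transpose_congruence:
  fixes M :: "'a::comm_semiring_0 mat"
  assumes M: "M \<in> carrier_mat n k" and D: "D \<in> carrier_mat n n"
  shows "transpose_mat (transpose_mat M * D * M) = transpose_mat M * transpose_mat D * M"
proof -
  have "transpose_mat (transpose_mat M * D * M) = transpose_mat M * transpose_mat (transpose_mat M * D)"
    using M D by (intro transpose_mult[of _ k n M k]) auto
  also have "\<dots> = transpose_mat M * (transpose_mat D * M)"
    using M D by (simp add: transpose_mult[of _ k n D n])
  also have "\<dots> = transpose_mat M * transpose_mat D * M"
    using M D by (simp add: assoc_mult_mat[of _ k n _ n _ k])
  finally show ?thesis .
qed

lemma alternating_eq_minus_transpose:
  assumes A: "A \<in> carrier_mat n n" "alternating A"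
  obtains B where "B \<in> carrier_mat n n" "A = B - transpose_mat B"
proof
  define B where "B = mat n n (\<lambda>(i, j). if i < j then A $$ (i, j) else 0)"
  show "B \<in> carrier_mat n n"
    by (simp add: B_def)
  have At: "transpose_mat A = - A" and diag: "\<And>i. i < n \<Longrightarrow> A $$ (i, i) = 0"
    using A by (simp_all add: alternating_def)
  show "A = B - transpose_mat B"
  proof (rule eq_matI)
    fix i j assume "i < dim_row (B - transpose_mat B)" "j < dim_col (B - transpose_mat B)"
    then have ij: "i < n" "j < n"
      by (simp_all add: B_def)
    have "A $$ (i, j) = - A $$ (j, i)"
      using arg_cong[OF At, of "\<lambda>X. X $$ (j, i)"] ij A(1) by simp
    then show "A $$ (i, j) = (B - transpose_mat B) $$ (i, j)"
      using ij diag[of i] by (auto simp: B_def)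
  qed (use A(1) in \<open>simp_all add: B_def\<close>)
qed

text \<open>Writing A as B minus its transpose makes the zero diagonal of the congruent matrix
  evident without dividing by 2.\<close>
lemma alternating_congruence:
  assumes A: "A \<in> carrier_mat n n" "alternating A" and M: "M \<in> carrier_mat n k"
  shows "alternating (transpose_mat M * A * M)"
proof -
  obtain B where B: "B \<in> carrier_mat n n" and AB: "A = B - transpose_mat B"
    using alternating_eq_minus_transpose[OF A] .
  define C where "C = transpose_mat M * B * M"
  have "transpose_mat M * A * M = C - transpose_mat C"
    unfolding AB C_def transpose_congruence[OF M B] using M B
    by (simp add: mult_minus_distrib_mat[of _ k n] minus_mult_distrib_mat[of _ k n])
  moreover have "C \<in> carrier_mat k k"
    using M B by (simp add: C_def)
  moreover have "transpose_mat (transpose_mat M * A * M) = - (transpose_mat M * A * M)"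
    using A M unfolding transpose_congruence[OF M A(1)] by (simp add: alternating_def)
  ultimately show ?thesis
    unfolding alternating_def by auto
qed

section \<open>Elementary matrices\<close>

lemma Elem_carrier_mat: "E \<in> Elem n \<Longrightarrow> E \<in> carrier_mat n n"
  by (induction rule: Elem.induct) (auto simp: elem_mat_def)

lemma elem_mat_carrier_mat [simp]: "elem_mat n i j a \<in> carrier_mat n n"
  by (simp add: elem_mat_def)

lemma Elem_mult:
  assumes E: "E \<in> Elem n" and F: "F \<in> Elem n"
  shows "E * F \<in> Elem n"
  using F
proof induction
  case Elem_one
  show ?case
    using E Elem_carrier_mat[OF E] by simp
next
  case (Elem_step F i j a)
  have "E * (F * elem_mat n i j a) = E * F * elem_mat n i j a"
    using Elem_carrier_mat[OF E] Elem_carrier_mat[OF Elem_step.hyps(1)]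
    by (simp add: assoc_mult_mat[of _ n n _ n _ n])
  then show ?case
    using Elem.Elem_step[OF Elem_step.IH Elem_step.hyps(2-4)] by simp
qed

lemma index_mult_elem_mat:
  fixes M :: "'a::comm_ring_1 mat"
  assumes M: "M \<in> carrier_mat n n" and "i < n" "j < n" "k < n" "l < n"
  shows "(M * elem_mat n i j a) $$ (k, l) = M $$ (k, l) + (if l = j then a * M $$ (k, i) else 0)"
proof -
  have "(M * elem_mat n i j a) $$ (k, l)
      = (\<Sum>p<n. M $$ (k, p) * ((if p = l then 1 else 0) + (if p = i \<and> l = j then a else 0)))"
    using assms by (auto simp: scalar_prod_def elem_mat_def lessThan_atLeast0 intro!: sum.cong)
  also have "\<dots> = (\<Sum>p<n. if p = l then M $$ (k, p) else 0)
      + (\<Sum>p<n. if p = i then (if l = j then a * M $$ (k, p) else 0) else 0)"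
    by (subst sum.distrib[symmetric]) (auto intro!: sum.cong simp: algebra_simps)
  also have "\<dots> = M $$ (k, l) + (if l = j then a * M $$ (k, i) else 0)"
    using assms by simp
  finally show ?thesis .
qed

text \<open>F F = 0 since P and Q are disjoint, so 1 + F is the product of the elementary matrices
  of its entries, which are added one at a time.\<close>
lemma unipotent_Elem:
  fixes F :: "nat \<times> nat \<Rightarrow> 'a::comm_ring_1"
  assumes supp: "\<And>p q. p < n \<Longrightarrow> q < n \<Longrightarrow> F (p, q) \<noteq> 0 \<Longrightarrow> p \<in> P \<and> q \<in> Q"
    and disj: "P \<inter> Q = {}"
  shows "1\<^sub>m n + mat n n F \<in> Elem n"
proof -
  let ?F = "\<lambda>S. mat n n (\<lambda>pq. if pq \<in> S then F pq else 0)"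
  let ?support = "(P \<inter> {..<n}) \<times> (Q \<inter> {..<n})"
  have partial: "1\<^sub>m n + ?F S \<in> Elem n" if "finite S" "S \<subseteq> ?support" for S
    using that
  proof (induction S rule: finite_induct)
    case empty
    have "1\<^sub>m n + ?F {} = 1\<^sub>m n"
      by (rule eq_matI) auto
    then show ?case
      using Elem_one by simp
  next
    case (insert pq S)
    obtain p q where pq: "pq = (p, q)" by fastforce
    with insert.prems have p: "p < n" "p \<in> P" and q: "q < n" "q \<in> Q"
      by auto
    with disj have "p \<noteq> q" by auto
    have step: "(1\<^sub>m n + ?F S) * elem_mat n p q (F pq) = 1\<^sub>m n + ?F (insert pq S)"
    proof (rule eq_matI)
      fix k l assume "k < dim_row (1\<^sub>m n + ?F (insert pq S))" "l < dim_col (1\<^sub>m n + ?F (insert pq S))"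
      then have kl: "k < n" "l < n" by auto
      have "(k, p) \<notin> S"
        using insert.prems p disj by auto
      then have "(1\<^sub>m n + ?F S) $$ (k, p) = (if k = p then 1 else 0)"
        using kl p by simp
      then show "((1\<^sub>m n + ?F S) * elem_mat n p q (F pq)) $$ (k, l) = (1\<^sub>m n + ?F (insert pq S)) $$ (k, l)"
        using kl p q insert.hyps(2) pq
        by (auto simp: index_mult_elem_mat[where n = n])
    qed (auto simp: elem_mat_def)
    have "1\<^sub>m n + ?F S \<in> Elem n"
      using insert.IH insert.prems by simp
    from Elem_step[OF this p(1) q(1) \<open>p \<noteq> q\<close>] show ?case
      unfolding step[symmetric] .
  qed
  have "finite ?support"
    by (intro finite_SigmaI) auto
  then have "1\<^sub>m n + ?F ?support \<in> Elem n"
    using partial by blast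
  moreover have "?F ?support = mat n n F"
  proof (rule eq_matI)
    fix i j assume "i < dim_row (mat n n F)" "j < dim_col (mat n n F)"
    then show "?F ?support $$ (i, j) = mat n n F $$ (i, j)"
      using supp[of i j] by auto
  qed auto
  ultimately show ?thesis
    by (simp only:)
qed

lemma mult_four_block_mat_square:
  assumes "A \<in> carrier_mat n n" "B \<in> carrier_mat n n" "C \<in> carrier_mat n n" "D \<in> carrier_mat n n"
    "A' \<in> carrier_mat n n" "B' \<in> carrier_mat n n" "C' \<in> carrier_mat n n" "D' \<in> carrier_mat n n"
  shows "four_block_mat A B C D * four_block_mat A' B' C' D'
    = four_block_mat (A * A' + B * C') (A * B' + B * D') (C * A' + D * C') (C * B' + D * D')"
  by (rule mult_four_block_mat[OF assms])

definition upper_unipotent :: "nat \<Rightarrow> 'a::comm_ring_1 mat \<Rightarrow> 'a mat" where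
  "upper_unipotent n X = four_block_mat (1\<^sub>m n) X (0\<^sub>m n n) (1\<^sub>m n)"

definition lower_unipotent :: "nat \<Rightarrow> 'a::comm_ring_1 mat \<Rightarrow> 'a mat" where
  "lower_unipotent n X = four_block_mat (1\<^sub>m n) (0\<^sub>m n n) X (1\<^sub>m n)"

lemma upper_unipotent_Elem:
  assumes X: "X \<in> carrier_mat n n"
  shows "upper_unipotent n X \<in> Elem (n + n)"
proof -
  have "upper_unipotent n X
      = 1\<^sub>m (n + n) + mat (n + n) (n + n) (\<lambda>(k, l). if k < n \<and> n \<le> l then X $$ (k, l - n) else 0)"
    by (rule eq_matI) (use X in \<open>auto simp: upper_unipotent_def\<close>)
  also have "\<dots> \<in> Elem (n + n)"
    by (rule unipotent_Elem[where P = "{..<n}" and Q = "{n..}"]) (auto split: if_splits)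
  finally show ?thesis .
qed

lemma lower_unipotent_Elem:
  assumes X: "X \<in> carrier_mat n n"
  shows "lower_unipotent n X \<in> Elem (n + n)"
proof -
  have "lower_unipotent n X
      = 1\<^sub>m (n + n) + mat (n + n) (n + n) (\<lambda>(k, l). if n \<le> k \<and> l < n then X $$ (k - n, l) else 0)"
    by (rule eq_matI) (use X in \<open>auto simp: lower_unipotent_def\<close>)
  also have "\<dots> \<in> Elem (n + n)"
    by (rule unipotent_Elem[where P = "{n..}" and Q = "{..<n}"]) (auto split: if_splits)
  finally show ?thesis .
qed

lemma upper_lower_upper:
  assumes "inverse_mats n X Y"
  shows "upper_unipotent n X * lower_unipotent n (- Y) * upper_unipotent n X
    = four_block_mat (0\<^sub>m n n) X (- Y) (0\<^sub>m n n)"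
proof -
  have X: "X \<in> carrier_mat n n" and Y: "Y \<in> carrier_mat n n"
    and XY: "X * Y = 1\<^sub>m n" and YX: "Y * X = 1\<^sub>m n"
    using assms by (simp_all add: inverse_mats_def)
  have "upper_unipotent n X * lower_unipotent n (- Y) = four_block_mat (0\<^sub>m n n) X (- Y) (1\<^sub>m n)"
    unfolding upper_unipotent_def lower_unipotent_def using X Y
    by (subst mult_four_block_mat_square[of _ n]) (auto simp: XY)
  also have "\<dots> * upper_unipotent n X = four_block_mat (0\<^sub>m n n) X (- Y) (0\<^sub>m n n)"
    unfolding upper_unipotent_def using X Y
    by (subst mult_four_block_mat_square[of _ n]) (auto simp: YX)
  finally show ?thesis .
qed

text \<open>Whitehead's lemma: H \<perp> H' is the product of the antidiagonal block matrices with blocks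
  (H, -H') and (-1, 1), each of which is a product of three block unipotent matrices.\<close>
lemma bdiag_inverse_Elem:
  assumes HH': "inverse_mats n H H'"
  shows "bdiag H H' \<in> Elem (n + n)"
proof -
  let ?ULU = "\<lambda>X Y. upper_unipotent n X * lower_unipotent n (- Y) * upper_unipotent n X"
  have one: "inverse_mats n (- 1\<^sub>m n) (- 1\<^sub>m n)"
    by (simp add: inverse_mats_def)
  have ULU_Elem: "?ULU X Y \<in> Elem (n + n)" if "inverse_mats n X Y" for X Y :: "'a mat"
    using that unfolding inverse_mats_def
    by (intro Elem_mult upper_unipotent_Elem lower_unipotent_Elem) auto
  have H: "H \<in> carrier_mat n n" "H' \<in> carrier_mat n n"
    using HH' by (simp_all add: inverse_mats_def)
  have "?ULU H H' * ?ULU (- 1\<^sub>m n) (- 1\<^sub>m n) = bdiag H H'"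
    unfolding upper_lower_upper[OF HH'] upper_lower_upper[OF one] bdiag_def using H
    by (subst mult_four_block_mat_square[of _ n]) auto
  moreover have "?ULU H H' * ?ULU (- 1\<^sub>m n) (- 1\<^sub>m n) \<in> Elem (n + n)"
    by (intro Elem_mult ULU_Elem HH' one)
  ultimately show ?thesis by simp
qed

lemma bdiag_elem_mat_one:
  "i < k \<Longrightarrow> j < k \<Longrightarrow> bdiag (elem_mat k i j a) (1\<^sub>m m) = elem_mat (k + m) i j a"
  by (rule eq_matI) (auto simp: bdiag_def elem_mat_def)

lemma Elem_bdiag_one:
  assumes "E \<in> Elem k"
  shows "bdiag E (1\<^sub>m m) \<in> Elem (k + m)"
  using assms
proof induction
  case Elem_one
  then show ?case by (simp add: Elem.Elem_one)
next
  case (Elem_step E i j a)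
  have "bdiag E (1\<^sub>m m) * elem_mat (k + m) i j a = bdiag E (1\<^sub>m m) * bdiag (elem_mat k i j a) (1\<^sub>m m)"
    using Elem_step.hyps(2,3) by (simp add: bdiag_elem_mat_one)
  also have "\<dots> = bdiag (E * elem_mat k i j a) (1\<^sub>m m)"
    using bdiag_mult[OF Elem_carrier_mat[OF Elem_step.hyps(1)] elem_mat_carrier_mat one_carrier_mat one_carrier_mat]
    by simp
  finally show ?case
    using Elem.Elem_step[OF Elem_step.IH, of i j a] Elem_step.hyps(2-4) by simp
qed

section \<open>Stable congruence\<close>

lemma bdiag_congruence:
  fixes Y :: "'a::comm_semiring_1 mat"
  assumes Y: "Y \<in> carrier_mat n n" and E: "E \<in> carrier_mat n n" and Z: "Z \<in> carrier_mat m m"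
  shows "bdiag (transpose_mat E * Y * E) Z = transpose_mat (bdiag E (1\<^sub>m m)) * bdiag Y Z * bdiag E (1\<^sub>m m)"
proof -
  have "transpose_mat (bdiag E (1\<^sub>m m)) * bdiag Y Z = bdiag (transpose_mat E * Y) Z"
    using transpose_bdiag[OF E one_carrier_mat] bdiag_mult[of "transpose_mat E" n Y "1\<^sub>m m" m Z] E Y Z
    by simp
  then show ?thesis
    using bdiag_mult[of "transpose_mat E * Y" n E Z m "1\<^sub>m m"] E Y Z by simp
qed

lemma bdiag_psi_add:
  "X \<in> carrier_mat a a \<Longrightarrow> bdiag X (psi (c + s)) = bdiag (bdiag X (psi c)) (psi s)"
  by (simp add: psi_add bdiag_assoc[of X a _ "2 * c" _ "2 * s"])

text \<open>The relation \<sim> of W'_E(R), with the two paddings chosen independently.\<close>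
definition stably_congruent :: "'a::comm_ring_1 mat \<Rightarrow> 'a mat \<Rightarrow> bool" where
  "stably_congruent X Y \<longleftrightarrow> square_mat X \<and> square_mat Y \<and>
    (\<exists>c d E. dim_row X + 2 * c = dim_row Y + 2 * d \<and> E \<in> Elem (dim_row X + 2 * c) \<and>
       bdiag X (psi c) = transpose_mat E * bdiag Y (psi d) * E)"

lemma stably_congruentI:
  assumes "X \<in> carrier_mat a a" "Y \<in> carrier_mat b b" "a + 2 * c = b + 2 * d" "E \<in> Elem (a + 2 * c)"
    and "bdiag X (psi c) = transpose_mat E * bdiag Y (psi d) * E"
  shows "stably_congruent X Y"
proof -
  have "square_mat X" "square_mat Y" "dim_row X = a" "dim_row Y = b"
    using assms(1,2) by auto
  moreover have "\<exists>c d E. a + 2 * c = b + 2 * d \<and> E \<in> Elem (a + 2 * c) \<and>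
      bdiag X (psi c) = transpose_mat E * bdiag Y (psi d) * E"
    using assms(3-5) by blast
  ultimately show ?thesis
    unfolding stably_congruent_def by simp
qed

lemma psi_padding_congruence:
  assumes X: "X \<in> carrier_mat a a" and Y: "Y \<in> carrier_mat b b" and dim: "a + 2 * c = b + 2 * d"
    and E: "E \<in> carrier_mat (a + 2 * c) (a + 2 * c)"
    and eq: "bdiag X (psi c) = transpose_mat E * bdiag Y (psi d) * E"
  shows "bdiag X (psi (c + s)) = transpose_mat (bdiag E (1\<^sub>m (2 * s))) * bdiag Y (psi (d + s)) * bdiag E (1\<^sub>m (2 * s))"
proof -
  have Y': "bdiag Y (psi d) \<in> carrier_mat (a + 2 * c) (a + 2 * c)"
    using Y dim by (metis bdiag_carrier_mat psi_carrier_mat)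
  have "bdiag X (psi (c + s)) = bdiag (transpose_mat E * bdiag Y (psi d) * E) (psi s)"
    using X by (simp add: bdiag_psi_add eq)
  also have "\<dots> = transpose_mat (bdiag E (1\<^sub>m (2 * s))) * bdiag (bdiag Y (psi d)) (psi s) * bdiag E (1\<^sub>m (2 * s))"
    by (rule bdiag_congruence[OF Y' E psi_carrier_mat])
  finally show ?thesis
    using Y by (simp add: bdiag_psi_add)
qed

lemma stably_congruent_trans [trans]:
  assumes XY: "stably_congruent X Y" and YZ: "stably_congruent Y Z"
  shows "stably_congruent X Z"
proof -
  define a where "a = dim_row X"
  define b where "b = dim_row Y"
  define e where "e = dim_row Z"
  have "dim_col X = a" "dim_col Y = b" "dim_col Z = e"
    using XY YZ unfolding stably_congruent_def square_mat.simps a_def b_def e_def by blast+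
  then have X: "X \<in> carrier_mat a a" and Y: "Y \<in> carrier_mat b b" and Z: "Z \<in> carrier_mat e e"
    unfolding a_def b_def e_def by auto
  obtain c d E where dXY: "a + 2 * c = b + 2 * d" and E: "E \<in> Elem (a + 2 * c)"
    and eqXY: "bdiag X (psi c) = transpose_mat E * bdiag Y (psi d) * E"
    using XY unfolding stably_congruent_def a_def b_def e_def by blast
  obtain c' d' F where dYZ: "b + 2 * c' = e + 2 * d'" and F: "F \<in> Elem (b + 2 * c')"
    and eqYZ: "bdiag Y (psi c') = transpose_mat F * bdiag Z (psi d') * F"
    using YZ unfolding stably_congruent_def a_def b_def e_def by blast
  define N where "N = a + 2 * (c + c')"
  define E' where "E' = bdiag E (1\<^sub>m (2 * c'))"
  define F' where "F' = bdiag F (1\<^sub>m (2 * d))"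
  have E': "E' \<in> Elem N"
    using Elem_bdiag_one[OF E, of "2 * c'"] unfolding E'_def N_def by (simp add: algebra_simps)
  have "b + 2 * c' + 2 * d = N"
    using dXY unfolding N_def by simp
  then have F': "F' \<in> Elem N"
    using Elem_bdiag_one[OF F, of "2 * d"] unfolding F'_def by simp
  have "e + 2 * (d' + d) = N"
    using dXY dYZ unfolding N_def by simp
  then have Z': "bdiag Z (psi (d' + d)) \<in> carrier_mat N N"
    using bdiag_carrier_mat[OF Z psi_carrier_mat[of "d' + d"]] by (simp only:)
  have "bdiag X (psi (c + c')) = transpose_mat E' * bdiag Y (psi (d + c')) * E'"
    unfolding E'_def using psi_padding_congruence[OF X Y dXY Elem_carrier_mat[OF E] eqXY] .
  also have "bdiag Y (psi (d + c')) = transpose_mat F' * bdiag Z (psi (d' + d)) * F'"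
    unfolding F'_def using psi_padding_congruence[OF Y Z dYZ Elem_carrier_mat[OF F] eqYZ, of d]
    by (simp add: add.commute)
  also have "transpose_mat E' * (transpose_mat F' * bdiag Z (psi (d' + d)) * F') * E'
      = transpose_mat (F' * E') * bdiag Z (psi (d' + d)) * (F' * E')"
    using Elem_carrier_mat[OF E'] Elem_carrier_mat[OF F'] Z'
    by (simp add: transpose_mult[of _ N N _ N] assoc_mult_mat[of _ N N _ N _ N])
  finally have eq: "bdiag X (psi (c + c')) = transpose_mat (F' * E') * bdiag Z (psi (d' + d)) * (F' * E')" .
  have "a + 2 * (c + c') = e + 2 * (d' + d)"
    using \<open>e + 2 * (d' + d) = N\<close> unfolding N_def by simp
  moreover have "F' * E' \<in> Elem (a + 2 * (c + c'))"
    using Elem_mult[OF F' E'] unfolding N_def .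
  ultimately show ?thesis
    by (rule stably_congruentI[OF X Z _ _ eq])
qed

lemma stably_congruent_bdiag_psi:
  assumes X: "X \<in> carrier_mat n n"
  shows "stably_congruent X (bdiag X (psi c))" "stably_congruent (bdiag X (psi c)) X"
proof -
  have XP: "bdiag X (psi c) \<in> carrier_mat (n + 2 * c) (n + 2 * c)"
    using X by simp
  then have eq: "bdiag X (psi c) = transpose_mat (1\<^sub>m (n + 2 * c)) * bdiag (bdiag X (psi c)) (psi 0) * 1\<^sub>m (n + 2 * c)"
    by (simp add: bdiag_empty_right left_mult_one_mat right_mult_one_mat)
  show "stably_congruent X (bdiag X (psi c))"
    by (rule stably_congruentI[OF X XP _ Elem_one eq]) simp
  from XP have eq': "bdiag (bdiag X (psi c)) (psi 0) = transpose_mat (1\<^sub>m (n + 2 * c)) * bdiag X (psi c) * 1\<^sub>m (n + 2 * c)"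
    by (simp add: bdiag_empty_right left_mult_one_mat right_mult_one_mat)
  show "stably_congruent (bdiag X (psi c)) X"
    by (rule stably_congruentI[OF XP X _ _ eq']) (simp_all add: Elem_one)
qed

lemma stably_congruent_congruence:
  assumes E: "E \<in> Elem n" and X: "X \<in> carrier_mat n n"
  shows "stably_congruent (transpose_mat E * X * E) X"
  using E X Elem_carrier_mat[OF E]
  by (intro stably_congruentI[where c = 0 and d = 0]) (auto simp: bdiag_empty_right)

lemma W_equiv_if_stably_congruent:
  assumes "X \<in> Sp' a" "Y \<in> Sp' b" and XY: "stably_congruent X Y"
  shows "W_equiv X Y"
proof -
  have X: "X \<in> carrier_mat (2 * a) (2 * a)" and Y: "Y \<in> carrier_mat (2 * b) (2 * b)"
    using assms by (simp_all add: Sp'_def)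
  obtain c d E where dim: "2 * a + 2 * c = 2 * b + 2 * d" and E: "E \<in> Elem (2 * a + 2 * c)"
    and eq: "bdiag X (psi c) = transpose_mat E * bdiag Y (psi d) * E"
    using XY X Y unfolding stably_congruent_def by auto
  define E' where "E' = bdiag E (1\<^sub>m (2 * (a + c)))"
  have "bdiag X (psi (c + (a + c))) = transpose_mat E' * bdiag Y (psi (d + (a + c))) * E'"
    unfolding E'_def by (rule psi_padding_congruence[OF X Y dim Elem_carrier_mat[OF E] eq])
  moreover have "c + (a + c) = b + (c + d)" "d + (a + c) = a + (c + d)"
    using dim by simp_all
  ultimately have "bdiag X (psi (b + (c + d))) = transpose_mat E' * bdiag Y (psi (a + (c + d))) * E'"
    by simp
  moreover have "2 * a + 2 * c + 2 * (a + c) = 2 * (b + a + (c + d))"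
    using dim by simp
  then have "E' \<in> Elem (2 * (b + a + (c + d)))"
    using Elem_bdiag_one[OF E, of "2 * (a + c)"] unfolding E'_def by (simp only:)
  ultimately show ?thesis
    using assms(1,2) unfolding W_equiv_def by blast
qed

section \<open>The map \<eta>\<close>

definition psi_gram :: "'a::comm_ring_1 mat \<Rightarrow> 'a mat" where
  "psi_gram A = transpose_mat A * psi (dim_row A div 2) * A"

definition even_pad :: "'a::comm_ring_1 mat \<Rightarrow> 'a mat" where
  "even_pad G = bdiag G (1\<^sub>m (dim_row G mod 2))"

lemma psi_gram_eq:
  "A \<in> carrier_mat (2 * r) (2 * r) \<Longrightarrow> psi_gram A = transpose_mat A * psi r * A"
  by (simp add: psi_gram_def)

lemma congruence_carrier_mat:
  "A \<in> carrier_mat n n \<Longrightarrow> M \<in> carrier_mat n n \<Longrightarrow> transpose_mat M * A * M \<in> carrier_mat n n"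
  by (metis mult_carrier_mat transpose_carrier_mat)

lemma psi_gram_carrier_mat:
  "A \<in> carrier_mat (2 * r) (2 * r) \<Longrightarrow> psi_gram A \<in> carrier_mat (2 * r) (2 * r)"
  unfolding psi_gram_eq by (rule congruence_carrier_mat[OF psi_carrier_mat])

lemma psi_gram_mult:
  assumes A: "A \<in> carrier_mat (2 * r) (2 * r)" and E: "E \<in> carrier_mat (2 * r) (2 * r)"
  shows "psi_gram (A * E) = transpose_mat E * psi_gram A * E"
proof -
  have At: "transpose_mat A \<in> carrier_mat (2 * r) (2 * r)"
    using A by simp
  have "psi r * A \<in> carrier_mat (2 * r) (2 * r)" "transpose_mat A * psi r \<in> carrier_mat (2 * r) (2 * r)"
    by (rule mult_carrier_mat[OF psi_carrier_mat A], rule mult_carrier_mat[OF At psi_carrier_mat])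
  with A E At show ?thesis
    by (simp add: psi_gram_eq[OF mult_carrier_mat[OF A E]] psi_gram_eq[OF A] transpose_mult[OF A E]
        assoc_mult_mat[of _ "2 * r" "2 * r" _ "2 * r" _ "2 * r"])
qed

lemma psi_gram_bdiag:
  assumes A: "A \<in> carrier_mat (2 * a) (2 * a)" and B: "B \<in> carrier_mat (2 * b) (2 * b)"
  shows "psi_gram (bdiag A B) = bdiag (psi_gram A) (psi_gram B)"
proof -
  have "bdiag A B \<in> carrier_mat (2 * (a + b)) (2 * (a + b))"
    using bdiag_carrier_mat[OF A B] by (simp add: add_mult_distrib2)
  then have "psi_gram (bdiag A B) = transpose_mat (bdiag A B) * psi (a + b) * bdiag A B"
    by (rule psi_gram_eq)
  also have "\<dots> = bdiag (transpose_mat A) (transpose_mat B) * bdiag (psi a) (psi b) * bdiag A B"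
    by (simp only: transpose_bdiag[OF A B] psi_add)
  also have "\<dots> = bdiag (transpose_mat A * psi a * A) (transpose_mat B * psi b * B)"
    using A B by (simp add: bdiag_mult[of _ "2 * a" _ _ "2 * b"])
  finally show ?thesis
    by (simp only: psi_gram_eq[OF A] psi_gram_eq[OF B])
qed

lemma psi_gram_one: "psi_gram (1\<^sub>m (2 * c)) = psi c"
  by (simp add: psi_gram_def)

lemma psi_gram_in_Sp':
  assumes "inverse_mats (2 * r) A B"
  shows "psi_gram A \<in> Sp' r"
proof -
  have A: "A \<in> carrier_mat (2 * r) (2 * r)"
    using assms by (simp add: inverse_mats_def)
  note gram = psi_gram_eq[OF A]
  have "alternating (psi_gram A)"
    unfolding gram by (rule alternating_congruence[OF psi_carrier_mat alternating_psi A])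
  moreover have "inverse_mats (2 * r) (psi_gram A) (B * (- psi r * transpose_mat B))"
    unfolding gram by (intro inverse_mats_mult inverse_mats_transpose assms inverse_mats_psi)
  ultimately show ?thesis
    unfolding Sp'_def using psi_gram_carrier_mat[OF A] inverse_mats_invertible_mat by blast
qed

lemma add_mod_2_eq_double_half: "(m::nat) + m mod 2 = 2 * ((m + 1) div 2)"
  by presburger

lemma even_pad_carrier_mat:
  assumes G: "G \<in> carrier_mat m m"
  shows "even_pad G \<in> carrier_mat (2 * ((m + 1) div 2)) (2 * ((m + 1) div 2))"
proof -
  have "even_pad G \<in> carrier_mat (m + m mod 2) (m + m mod 2)"
    using G by (simp add: even_pad_def)
  then show ?thesis
    by (simp only: add_mod_2_eq_double_half)
qed

lemma inverse_mats_even_pad: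
  assumes "inverse_mats m G G'"
  shows "inverse_mats (2 * ((m + 1) div 2)) (even_pad G) (even_pad G')"
proof -
  have "dim_row G = m" "dim_row G' = m"
    using assms unfolding inverse_mats_def by (metis carrier_matD(1))+
  then have "inverse_mats (m + m mod 2) (even_pad G) (even_pad G')"
    unfolding even_pad_def by (simp only: inverse_mats_bdiag[OF assms inverse_mats_one])
  then show ?thesis
    by (simp only: add_mod_2_eq_double_half)
qed

lemma even_pad_mult:
  assumes G: "G \<in> carrier_mat m m" and H: "H \<in> carrier_mat m m"
  shows "even_pad (G * H) = even_pad G * even_pad H"
  using G H bdiag_mult[OF G H one_carrier_mat one_carrier_mat, of "m mod 2"]
  by (simp add: even_pad_def)

lemma even_pad_bdiag_one:
  assumes G: "G \<in> carrier_mat m m"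
  obtains c where "even_pad (bdiag G (1\<^sub>m s)) = bdiag (even_pad G) (1\<^sub>m (2 * c))"
proof -
  obtain c where c: "s + (m + s) mod 2 = m mod 2 + 2 * c"
  proof
    show "s + (m + s) mod 2 = m mod 2 + 2 * ((s + (m + s) mod 2 - m mod 2) div 2)"
      by (cases "even m"; cases "even s") (auto elim!: evenE oddE)
  qed
  have "even_pad (bdiag G (1\<^sub>m s)) = bdiag (bdiag G (1\<^sub>m s)) (1\<^sub>m ((m + s) mod 2))"
    using G by (simp add: even_pad_def)
  also have "\<dots> = bdiag G (bdiag (1\<^sub>m (m mod 2)) (1\<^sub>m (2 * c)))"
    unfolding bdiag_assoc[OF G one_carrier_mat one_carrier_mat] bdiag_one_mat c ..
  also have "\<dots> = bdiag (even_pad G) (1\<^sub>m (2 * c))"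
    using G unfolding even_pad_def bdiag_assoc[OF G one_carrier_mat one_carrier_mat] by simp
  finally show ?thesis
    using that by blast
qed

lemma eta_eq_psi_gram_even_pad:
  assumes G: "G \<in> carrier_mat m m"
  shows "eta G = psi_gram (even_pad G)"
proof (cases "even m")
  case True
  then have "even_pad G = G"
    using G unfolding even_pad_def by (intro bdiag_empty_right) simp
  then show ?thesis
    using True G by (simp add: eta_def psi_gram_def)
next
  case False
  then have "even_pad G = bdiag G (1\<^sub>m 1)"
    using G unfolding even_pad_def by (simp add: odd_iff_mod_2_eq_one)
  moreover have "(m + 1) div 2 = m div 2 + 1"
    using False by presburger
  ultimately show ?thesis
    using False G by (simp add: eta_def psi_gram_def)
qed

lemma Elem_even_pad:
  assumes "E \<in> Elem k"
  shows "even_pad E \<in> Elem (2 * ((k + 1) div 2))"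
  using Elem_bdiag_one[OF assms, of "k mod 2"] Elem_carrier_mat[OF assms]
  by (simp add: even_pad_def add_mod_2_eq_double_half)

lemma eta_carrier_mat:
  assumes G: "G \<in> carrier_mat m m"
  shows "eta G \<in> carrier_mat (2 * ((m + 1) div 2)) (2 * ((m + 1) div 2))"
  unfolding eta_eq_psi_gram_even_pad[OF G] by (rule psi_gram_carrier_mat[OF even_pad_carrier_mat[OF G]])

lemma eta_in_Sp':
  assumes "G \<in> GL m"
  shows "eta G \<in> Sp' ((m + 1) div 2)"
proof -
  obtain G' where "inverse_mats m G G'"
    using assms GL_iff_inverse_mats by blast
  then show ?thesis
    unfolding eta_eq_psi_gram_even_pad[OF GL_carrier_mat[OF assms]]
    by (rule psi_gram_in_Sp'[OF inverse_mats_even_pad])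
qed

lemma eta_bdiag_one:
  assumes G: "G \<in> carrier_mat m m"
  obtains c where "eta (bdiag G (1\<^sub>m s)) = bdiag (eta G) (psi c)"
proof -
  obtain c where c: "even_pad (bdiag G (1\<^sub>m s)) = bdiag (even_pad G) (1\<^sub>m (2 * c))"
    using even_pad_bdiag_one[OF G] .
  have "eta (bdiag G (1\<^sub>m s)) = psi_gram (even_pad (bdiag G (1\<^sub>m s)))"
    by (rule eta_eq_psi_gram_even_pad[OF bdiag_carrier_mat[OF G one_carrier_mat]])
  also have "\<dots> = bdiag (psi_gram (even_pad G)) (psi_gram (1\<^sub>m (2 * c)))"
    unfolding c by (rule psi_gram_bdiag[OF even_pad_carrier_mat[OF G] one_carrier_mat])
  also have "\<dots> = bdiag (eta G) (psi c)"
    by (simp only: eta_eq_psi_gram_even_pad[OF G] psi_gram_one)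
  finally show ?thesis
    using that by blast
qed

lemma stably_congruent_eta_bdiag_one:
  assumes G: "G \<in> carrier_mat m m"
  shows "stably_congruent (eta G) (eta (bdiag G (1\<^sub>m s)))" "stably_congruent (eta (bdiag G (1\<^sub>m s))) (eta G)"
proof -
  obtain c where c: "eta (bdiag G (1\<^sub>m s)) = bdiag (eta G) (psi c)"
    using eta_bdiag_one[OF G] .
  show "stably_congruent (eta G) (eta (bdiag G (1\<^sub>m s)))" "stably_congruent (eta (bdiag G (1\<^sub>m s))) (eta G)"
    unfolding c by (rule stably_congruent_bdiag_psi[OF eta_carrier_mat[OF G]])+
qed

lemma stably_congruent_eta_mult_Elem:
  assumes G: "G \<in> carrier_mat k k" and E: "E \<in> Elem k"
  shows "stably_congruent (eta (G * E)) (eta G)"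
proof -
  have Ek: "E \<in> carrier_mat k k"
    by (rule Elem_carrier_mat[OF E])
  have "eta (G * E) = psi_gram (even_pad G * even_pad E)"
    by (simp only: eta_eq_psi_gram_even_pad[OF mult_carrier_mat[OF G Ek]] even_pad_mult[OF G Ek])
  also have "\<dots> = transpose_mat (even_pad E) * eta G * even_pad E"
    by (simp only: psi_gram_mult[OF even_pad_carrier_mat[OF G] even_pad_carrier_mat[OF Ek]]
        eta_eq_psi_gram_even_pad[OF G])
  finally show ?thesis
    using stably_congruent_congruence[OF Elem_even_pad[OF E] eta_carrier_mat[OF G]] by simp
qed

lemma bdiag_eta_eq_psi_gram:
  assumes "G \<in> carrier_mat m m" "H \<in> carrier_mat m m"
  shows "bdiag (eta G) (eta H) = psi_gram (bdiag (even_pad G) (even_pad H))"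
  unfolding eta_eq_psi_gram_even_pad[OF assms(1)] eta_eq_psi_gram_even_pad[OF assms(2)]
  by (rule psi_gram_bdiag[OF even_pad_carrier_mat[OF assms(1)] even_pad_carrier_mat[OF assms(2)], symmetric])

text \<open>The matrix identity behind multiplicativity: (A B) \<perp> 1 = (A \<perp> B) (B \<perp> B\<inverse>).\<close>
lemma psi_gram_mult_bdiag_psi:
  assumes A: "A \<in> carrier_mat (2 * r) (2 * r)" and BB': "inverse_mats (2 * r) B B'"
  shows "bdiag (psi_gram (A * B)) (psi r) = transpose_mat (bdiag B B') * psi_gram (bdiag A B) * bdiag B B'"
proof -
  have B: "B \<in> carrier_mat (2 * r) (2 * r)" and B': "B' \<in> carrier_mat (2 * r) (2 * r)"
    and inv: "B * B' = 1\<^sub>m (2 * r)"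
    using BB' by (simp_all add: inverse_mats_def)
  have cAB: "bdiag A B \<in> carrier_mat (2 * (r + r)) (2 * (r + r))"
    using bdiag_carrier_mat[OF A B] by (simp only: add_mult_distrib2)
  have cBB': "bdiag B B' \<in> carrier_mat (2 * (r + r)) (2 * (r + r))"
    using bdiag_carrier_mat[OF B B'] by (simp only: add_mult_distrib2)
  have "bdiag (psi_gram (A * B)) (psi r) = psi_gram (bdiag (A * B) (1\<^sub>m (2 * r)))"
    by (simp only: psi_gram_bdiag[OF mult_carrier_mat[OF A B] one_carrier_mat] psi_gram_one)
  also have "bdiag (A * B) (1\<^sub>m (2 * r)) = bdiag A B * bdiag B B'"
    unfolding bdiag_mult[OF A B B B'] inv ..
  also have "psi_gram (bdiag A B * bdiag B B') = transpose_mat (bdiag B B') * psi_gram (bdiag A B) * bdiag B B'"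
    by (rule psi_gram_mult[OF cAB cBB'])
  finally show ?thesis .
qed

lemma stably_congruent_eta_mult:
  assumes "G \<in> GL m" and "H \<in> GL m"
  shows "stably_congruent (eta (G * H)) (bdiag (eta G) (eta H))"
proof -
  obtain H' where HH': "inverse_mats m H H'"
    using assms(2) GL_iff_inverse_mats by blast
  have G: "G \<in> carrier_mat m m" and H: "H \<in> carrier_mat m m"
    using assms by (simp_all add: GL_carrier_mat)
  define r where "r = (m + 1) div 2"
  define W where "W = bdiag (even_pad H) (even_pad H')"
  have pads: "inverse_mats (2 * r) (even_pad H) (even_pad H')"
    unfolding r_def by (rule inverse_mats_even_pad[OF HH'])
  have W: "W \<in> Elem (2 * r + 2 * r)"
    unfolding W_def by (rule bdiag_inverse_Elem[OF pads])
  have eq: "bdiag (eta (G * H)) (psi r) = transpose_mat W * bdiag (bdiag (eta G) (eta H)) (psi 0) * W"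
    using psi_gram_mult_bdiag_psi[OF even_pad_carrier_mat[OF G, folded r_def] pads]
    unfolding eta_eq_psi_gram_even_pad[OF mult_carrier_mat[OF G H]] even_pad_mult[OF G H]
      bdiag_eta_eq_psi_gram[OF G H] W_def
    by (simp add: bdiag_empty_right)
  have "eta (G * H) \<in> carrier_mat (2 * r) (2 * r)"
    unfolding r_def by (rule eta_carrier_mat[OF mult_carrier_mat[OF G H]])
  moreover have "bdiag (eta G) (eta H) \<in> carrier_mat (2 * r + 2 * r) (2 * r + 2 * r)"
    unfolding r_def by (rule bdiag_carrier_mat[OF eta_carrier_mat[OF G] eta_carrier_mat[OF H]])
  ultimately show ?thesis
    by (rule stably_congruentI[OF _ _ _ W eq]) simp
qed

lemma W_equiv_eta_bdiag_one:
  assumes "G \<in> GL m"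
  shows "W_equiv (eta (bdiag G (1\<^sub>m s))) (eta G)"
  using W_equiv_if_stably_congruent[OF eta_in_Sp'[OF GL_bdiag_one[OF assms]] eta_in_Sp'[OF assms]]
    stably_congruent_eta_bdiag_one(2)[OF GL_carrier_mat[OF assms]] .

lemma W_equiv_eta_if_K1_equiv:
  assumes G: "G \<in> GL m" and H: "H \<in> GL n" and "K1_equiv G H"
  shows "W_equiv (eta G) (eta H)"
proof -
  have Gc: "G \<in> carrier_mat m m" and Hc: "H \<in> carrier_mat n n"
    using G H by (simp_all add: GL_carrier_mat)
  obtain k E where "dim_row H \<le> k" and E: "E \<in> Elem k" and "stab G k = stab H k * E"
    using \<open>K1_equiv G H\<close> unfolding K1_equiv_def by blast
  moreover have "dim_row G = m" "dim_row H = n"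
    using Gc Hc by simp_all
  ultimately have "n \<le> k" and eq: "bdiag G (1\<^sub>m (k - m)) = bdiag H (1\<^sub>m (k - n)) * E"
    unfolding stab_def by simp_all
  have "stably_congruent (eta G) (eta (bdiag G (1\<^sub>m (k - m))))"
    by (rule stably_congruent_eta_bdiag_one(1)[OF Gc])
  also have "bdiag H (1\<^sub>m (k - n)) \<in> carrier_mat k k"
    using bdiag_carrier_mat[OF Hc one_carrier_mat[of "k - n"]] \<open>n \<le> k\<close> by simp
  then have "stably_congruent (eta (bdiag G (1\<^sub>m (k - m)))) (eta (bdiag H (1\<^sub>m (k - n))))"
    unfolding eq by (rule stably_congruent_eta_mult_Elem[OF _ E])
  also have "stably_congruent (eta (bdiag H (1\<^sub>m (k - n)))) (eta H)"
    by (rule stably_congruent_eta_bdiag_one(2)[OF Hc])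
  finally show ?thesis
    using W_equiv_if_stably_congruent eta_in_Sp' G H by blast
qed

lemma W_equiv_eta_mult:
  assumes G: "G \<in> GL m" and H: "H \<in> GL m"
  shows "W_equiv (eta (G * H)) (bdiag (eta G) (eta H))"
proof -
  obtain G' H' where GG': "inverse_mats m G G'" and HH': "inverse_mats m H H'"
    using assms GL_iff_inverse_mats by blast
  have "inverse_mats (2 * ((m + 1) div 2 + (m + 1) div 2))
      (bdiag (even_pad G) (even_pad H)) (bdiag (even_pad G') (even_pad H'))"
    using inverse_mats_bdiag[OF inverse_mats_even_pad[OF GG'] inverse_mats_even_pad[OF HH']]
    by (simp only: add_mult_distrib2)
  then have "psi_gram (bdiag (even_pad G) (even_pad H)) \<in> Sp' ((m + 1) div 2 + (m + 1) div 2)"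
    by (rule psi_gram_in_Sp')
  then have "bdiag (eta G) (eta H) \<in> Sp' ((m + 1) div 2 + (m + 1) div 2)"
    unfolding bdiag_eta_eq_psi_gram[OF GL_carrier_mat[OF G] GL_carrier_mat[OF H]] .
  then show ?thesis
    by (rule W_equiv_if_stably_congruent[OF eta_in_Sp'[OF GL_mult[OF G H]] _ stably_congruent_eta_mult[OF G H]])
qed

theorem lemma2p4:
  fixes R :: "'a::comm_ring_1 itself"
  assumes two_unit: "\<exists>u::'a. 2 * u = 1"
  shows "(\<forall>m (G::'a mat). G \<in> GL m \<longrightarrow> eta G \<in> S')
       \<and> (\<forall>m (G::'a mat). G \<in> GL m \<longrightarrow> W_equiv (eta (bdiag G (1\<^sub>m 1))) (eta G))
       \<and> (\<forall>m n (G::'a mat) H. G \<in> GL m \<longrightarrow> H \<in> GL n \<longrightarrow> K1_equiv G H \<longrightarrow>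
             W_equiv (eta G) (eta H))
       \<and> (\<forall>m (G::'a mat) H. G \<in> GL m \<longrightarrow> H \<in> GL m \<longrightarrow>
             W_equiv (eta (G * H)) (bdiag (eta G) (eta H)))"
proof -
  have "eta G \<in> S'" if "G \<in> GL m" for m and G :: "'a mat"
    unfolding S'_def using eta_in_Sp'[OF that] by blast
  then show ?thesis
    using W_equiv_eta_bdiag_one W_equiv_eta_if_K1_equiv W_equiv_eta_mult by blast
qed

end
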